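(* Let $\zeta<1$, $t>0$, real $\alpha,\mu$, and $w(x)=(1-\zeta\,\theta(x-t))(x-t)^{\alpha}x^{\mu}e^{-x}$ on $(0,\infty)$, with orthonormal polynomials $p_m(x)=\gamma_mx^m+\gamma_{m,1}x^{m-1}+\dots$ and recurrence coefficients $a_m,b_m$. With $\theta_m=b_m-2m-1-\alpha-\mu-t$ and $\kappa_m=(m+\frac{\mu}{2})t+a_m^2+\frac{\gamma_{m,1}}{\gamma_m}$, one has for $n\ge1$ $$\kappa_{n+1}+\kappa_n=-\theta_n(\theta_n+t+2n+\alpha+1+\mu),$$ $$\frac{\theta_n}{\theta_n+t}\cdot\frac{\theta_{n-1}}{\theta_{n-1}+t}=\frac{\kappa_n^2-\frac{\mu^2t^2}{4}}{\big(\kappa_n-(n+\alpha+\frac{\mu}{2})t\big)\big(\kappa_n-(n+\frac{\mu}{2})t\big)}.$$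
   Context: $\theta$ is the Heaviside function ($\theta(y)=1$ for $y>0$, $0$ otherwise). The $p_m$ are orthonormal: $\int_0^\infty p_ip_jw\,dx=\delta_{ij}$, $\gamma_m>0$, and $a_{m+1}p_{m+1}=(x-b_m)p_m-a_mp_{m-1}$ with $a_m=\gamma_{m-1}/\gamma_m$. *)

theory Defs
  imports "HOL-Analysis.Analysis" "HOL-Computational_Algebra.Polynomial"
begin

definition heaviside :: "real \<Rightarrow> real" where
  "heaviside y = (if y > 0 then 1 else 0)"

definition wgt :: "real \<Rightarrow> real \<Rightarrow> real \<Rightarrow> real \<Rightarrow> real \<Rightarrow> real" where
  "wgt \<zeta> t \<alpha> \<mu> x =
     (1 - \<zeta> * heaviside (x - t)) * \<bar>x - t\<bar> powr \<alpha> * x powr \<mu> * exp (- x)"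

definition orthonormal_system :: "(real \<Rightarrow> real) \<Rightarrow> (nat \<Rightarrow> real poly) \<Rightarrow> bool" where
  "orthonormal_system w p \<longleftrightarrow>
     (\<forall>m. degree (p m) = m \<and> lead_coeff (p m) > 0) \<and>
     (\<forall>i j. set_integrable lborel {0<..} (\<lambda>x. poly (p i) x * poly (p j) x * w x) \<and>
            (LINT x:{0<..}|lborel. poly (p i) x * poly (p j) x * w x) = (if i = j then 1 else 0))"

definition gam :: "(nat \<Rightarrow> real poly) \<Rightarrow> nat \<Rightarrow> real" where
  "gam p m = lead_coeff (p m)"

definition gam1 :: "(nat \<Rightarrow> real poly) \<Rightarrow> nat \<Rightarrow> real" where
  "gam1 p m = coeff (p m) (m - 1)"

definition acoef :: "(nat \<Rightarrow> real poly) \<Rightarrow> nat \<Rightarrow> real" where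
  "acoef p m = gam p (m - 1) / gam p m"

definition bcoef :: "(real \<Rightarrow> real) \<Rightarrow> (nat \<Rightarrow> real poly) \<Rightarrow> nat \<Rightarrow> real" where
  "bcoef w p m = (LINT x:{0<..}|lborel. x * (poly (p m) x)^2 * w x)"

end

theory Submission
  imports Defs "HOL-Real_Asymp.Real_Asymp"
begin

text \<open>Away from \<open>t\<close> the weight satisfies \<open>\<omega>'/\<omega> = \<alpha>/(x - t) + \<mu>/x - 1\<close>, so with \<open>A(x) = x(x - t)\<close>
  integration by parts gives \<open>\<integral> ((A q)' + B q) \<omega> = 0\<close> for every polynomial \<open>q\<close>, where
  \<open>B = A \<omega>'/\<omega>\<close> is a polynomial; the boundary terms at \<open>0\<close>, \<open>t\<close> and \<open>\<infinity>\<close> vanish because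
  \<open>A(0) = A(t) = 0\<close> and integrability of \<open>\<omega>\<close> forces \<open>\<alpha>, \<mu> > -1\<close>.
  Pairing \<open>A p\<^sub>m'\<close> with \<open>p\<^sub>m\<close> by this identity gives the first relation; pairing it with lower
  \<open>p\<^sub>k\<close> gives \<open>A p\<^sub>n' = (\<mu>t/2 - \<kappa>\<^sub>n + n x) p\<^sub>n + a\<^sub>n (\<theta>\<^sub>n + x) p\<^sub>n\<^sub>-\<^sub>1\<close>.
  Evaluating this at the zeros \<open>x = 0\<close> and \<open>x = t\<close> of \<open>A\<close>, for \<open>n\<close> and \<open>n - 1\<close>, and eliminating
  \<open>p\<^sub>n\<^sub>-\<^sub>2\<close> with the three-term recurrence yields a \<open>2\<times>2\<close> linear system for
  \<open>(p\<^sub>n(x), p\<^sub>n\<^sub>-\<^sub>1(x)) \<noteq> 0\<close>; its vanishing determinant is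
  \<open>a\<^sub>n\<^sup>2 \<theta>\<^sub>n \<theta>\<^sub>n\<^sub>-\<^sub>1 = \<kappa>\<^sub>n\<^sup>2 - \<mu>\<^sup>2t\<^sup>2/4\<close> at \<open>x = 0\<close> and the analogous factorisation at
  \<open>x = t\<close>, whose quotient is the second relation.\<close>

section \<open>Orthonormal polynomials\<close>

lemma degree_le_if_coeff_Suc_eq_0:
  "degree (r :: 'a :: zero poly) \<le> Suc m \<Longrightarrow> coeff r (Suc m) = 0 \<Longrightarrow> degree r \<le> m"
  by (metis Suc_lessI coeff_eq_0 degree_le le_less_trans)

locale orthonormal_polys =
  fixes w :: "real \<Rightarrow> real" and p :: "nat \<Rightarrow> real poly"
  assumes orthonormal: "orthonormal_system w p"
begin

lemma degree_p [simp]: "degree (p m) = m"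
  using orthonormal unfolding orthonormal_system_def by auto

lemma gam_pos: "gam p m > 0"
  using orthonormal unfolding orthonormal_system_def gam_def by auto

lemma gam_nonzero [simp]: "gam p m \<noteq> 0"
  using gam_pos[of m] by simp

lemma coeff_p_degree [simp]: "coeff (p m) m = gam p m"
  by (simp add: gam_def)

lemma coeff_p_above [simp]: "k < i \<Longrightarrow> coeff (p k) i = 0"
  by (simp add: coeff_eq_0)

lemma p_nonzero [simp]: "p k \<noteq> 0"
  using gam_nonzero[of k] unfolding gam_def by (metis leading_coeff_0_iff)

lemma p_0: "p 0 = [:gam p 0:]"
  using degree_p[of 0] by (metis degree_0_id coeff_p_degree)

lemma degree_sub_top_le:
  assumes "degree r \<le> Suc m"
  shows "degree (r - smult (coeff r (Suc m) / gam p (Suc m)) (p (Suc m))) \<le> m"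
proof (rule degree_le_if_coeff_Suc_eq_0)
  show "degree (r - smult (coeff r (Suc m) / gam p (Suc m)) (p (Suc m))) \<le> Suc m"
    using assms by (metis degree_diff_le degree_smult_le degree_p order.trans)
qed simp

lemma span_p_induct [consumes 1, case_names zero step]:
  assumes "degree q \<le> m" and "P 0"
    and "\<And>c k r. k \<le> m \<Longrightarrow> P r \<Longrightarrow> P (smult c (p k) + r)"
  shows "P q"
  using assms
proof (induction m arbitrary: q)
  case 0
  then have "q = smult (coeff q 0 / gam p 0) (p 0) + 0"
    by (subst p_0) (auto simp: degree_0_id)
  moreover have "P (smult (coeff q 0 / gam p 0) (p 0) + 0)"
    by (rule 0(3)[OF _ 0(2)]) simp
  ultimately show ?case by simp
next
  case (Suc m)
  define c where "c = coeff q (Suc m) / gam p (Suc m)"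
  have "P (q - smult c (p (Suc m)))"
    using Suc degree_sub_top_le[OF Suc.prems(1)] unfolding c_def by auto
  then have "P (smult c (p (Suc m)) + (q - smult c (p (Suc m))))"
    by (rule Suc.prems(3)[rotated]) simp
  then show ?case by simp
qed

definition moment :: "real poly \<Rightarrow> real" where
  "moment q = (LINT x:{0<..}|lborel. poly q x * w x)"

lemma set_integrable_p:
  "set_integrable lborel {0<..} (\<lambda>x. poly (p i) x * w x)"
proof -
  have "set_integrable lborel {0<..} (\<lambda>x. poly (p i) x * poly (p 0) x * w x / gam p 0)"
    using orthonormal unfolding orthonormal_system_def by (auto intro: set_integrable_divide)
  then show ?thesis by (subst (asm) p_0) simp
qed

lemma set_integrable_poly: "set_integrable lborel {0<..} (\<lambda>x. poly q x * w x)"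
proof -
  have "degree q \<le> degree q" by simp
  then show ?thesis
  proof (induction q rule: span_p_induct)
    case zero then show ?case by (simp add: set_integrable_def)
  next
    case (step c k r)
    have "set_integrable lborel {0<..} (\<lambda>x. c * (poly (p k) x * w x) + poly r x * w x)"
      using set_integrable_p[of k] step by (intro set_integral_add) auto
    then show ?case by (simp add: algebra_simps)
  qed
qed

lemma moment_add: "moment (q + r) = moment q + moment r"
  unfolding moment_def using set_integrable_poly[of q] set_integrable_poly[of r]
  by (simp add: distrib_right set_integral_add)

lemma moment_smult: "moment (smult c q) = c * moment q"
  unfolding moment_def by (simp add: mult.assoc)

lemma moment_diff: "moment (q - r) = moment q - moment r"
  using moment_add[of q "- r"] moment_smult[of "- 1" r] by simp

lemma moment_0 [simp]: "moment 0 = 0"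
  unfolding moment_def by simp

lemmas moment_linear = moment_add moment_diff moment_smult

lemma moment_pp: "moment (p i * p j) = (if i = j then 1 else 0)"
  using orthonormal unfolding orthonormal_system_def moment_def by (simp add: mult.assoc)

lemma moment_mult_p_degree_less:
  assumes "degree r < n"
  shows "moment (r * p n) = 0"
proof -
  have "degree r \<le> n - 1" using assms by simp
  then show ?thesis
  proof (induction r rule: span_p_induct)
    case (step c k r)
    then show ?case using assms
      by (simp add: distrib_right moment_add moment_smult moment_pp)
  qed simp
qed

lemma moment_mult_p_degree_le:
  assumes "degree r \<le> n"
  shows "moment (r * p n) = coeff r n / gam p n"
proof -
  define c where "c = coeff r n / gam p n"
  define r' where "r' = r - smult c (p n)"
  have "degree r' \<le> n" "coeff r' n = 0"
    using assms unfolding r'_def c_def by (auto intro: degree_diff_le)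
  then have "r' = 0 \<or> degree r' < n"
    by (metis le_neq_implies_less leading_coeff_0_iff)
  then have "moment (r' * p n) = 0" using moment_mult_p_degree_less by auto
  moreover have "r * p n = r' * p n + smult c (p n * p n)"
    unfolding r'_def by (simp add: algebra_simps)
  ultimately show ?thesis by (simp add: moment_add moment_smult moment_pp c_def)
qed

lemma moment_mult_p_degree_le_Suc:
  assumes "degree r \<le> Suc n"
  shows "moment (r * p n) =
    (coeff r n - coeff r (Suc n) * (coeff (p (Suc n)) n / gam p (Suc n))) / gam p n"
proof -
  define c where "c = coeff r (Suc n) / gam p (Suc n)"
  define r' where "r' = r - smult c (p (Suc n))"
  have "moment (r' * p n) = coeff r' n / gam p n"
    using degree_sub_top_le[OF assms] unfolding r'_def c_def by (rule moment_mult_p_degree_le)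
  moreover have "r * p n = r' * p n + smult c (p (Suc n) * p n)"
    unfolding r'_def by (simp add: algebra_simps)
  ultimately show ?thesis
    by (simp add: moment_add moment_smult moment_pp r'_def c_def diff_divide_distrib)
qed

lemma eq_0_if_orthogonal:
  "degree q \<le> m \<Longrightarrow> (\<And>k. k \<le> m \<Longrightarrow> moment (q * p k) = 0) \<Longrightarrow> q = 0"
proof (induction m arbitrary: q)
  case 0
  then have "coeff q 0 = 0" using moment_mult_p_degree_le[of q 0] by simp
  then show ?case using 0(1) by (metis degree_0_id le_0_eq pCons_0_0)
next
  case (Suc m)
  then have "coeff q (Suc m) = 0" using moment_mult_p_degree_le[of q "Suc m"] by simp
  then have "degree q \<le> m" by (rule degree_le_if_coeff_Suc_eq_0[OF Suc.prems(1)])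
  then show ?case using Suc by auto
qed

text \<open>\<open>acoef p 0 = 1\<close> and \<open>gam1 p 0 = gam p 0\<close> are junk values (truncated subtraction);
  the recurrence needs the conventions \<open>a\<^sub>0 = 0\<close> and \<open>\<gamma>\<^sub>0\<^sub>,\<^sub>1 = 0\<close>.\<close>

definition rec_a :: "nat \<Rightarrow> real" where
  "rec_a m = (if m = 0 then 0 else acoef p m)"

definition sublead :: "nat \<Rightarrow> real" where
  "sublead m = (if m = 0 then 0 else coeff (p m) (m - 1) / gam p m)"

lemma acoef_pos: "acoef p m > 0"
  unfolding acoef_def using gam_pos by simp

lemma bcoef_eq_moment: "bcoef w p m = moment (pCons 0 (p m * p m))"
  unfolding bcoef_def moment_def by (simp add: power2_eq_square algebra_simps)

lemma moment_x_pp: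
  "moment (pCons 0 (p i * p j)) =
    (if i = j then bcoef w p i else if j = Suc i then acoef p j
     else if i = Suc j then acoef p i else 0)"
proof -
  have swap: "pCons 0 (p i * p j) = pCons 0 (p i) * p j" "pCons 0 (p i * p j) = pCons 0 (p j) * p i"
    by (simp_all add: mult.commute)
  consider "i = j" | "j = Suc i" | "i = Suc j" | "Suc i < j" | "Suc j < i" by linarith
  then show ?thesis
  proof cases
    case 1 then show ?thesis by (simp add: bcoef_eq_moment)
  next
    case 2 then show ?thesis
      unfolding swap(1) by (subst moment_mult_p_degree_le) (auto simp: acoef_def degree_pCons_eq_if)
  next
    case 3 then show ?thesis
      unfolding swap(2) by (subst moment_mult_p_degree_le) (auto simp: acoef_def degree_pCons_eq_if)
  next
    case 4 then show ?thesis
      unfolding swap(1) by (subst moment_mult_p_degree_less) (auto simp: degree_pCons_eq_if)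
  next
    case 5 then show ?thesis
      unfolding swap(2) by (subst moment_mult_p_degree_less) (auto simp: degree_pCons_eq_if)
  qed
qed

theorem three_term_recurrence:
  "pCons 0 (p n) =
    smult (acoef p (Suc n)) (p (Suc n)) + smult (bcoef w p n) (p n) + smult (rec_a n) (p (n - 1))"
proof -
  define F where "F = pCons 0 (p n) -
    (smult (acoef p (Suc n)) (p (Suc n)) + smult (bcoef w p n) (p n) + smult (rec_a n) (p (n - 1)))"
  have "degree F \<le> n"
  proof (rule degree_le, intro allI impI)
    fix i assume "n < i"
    then obtain j where "i = Suc j" "n \<le> j" by (cases i) auto
    then show "coeff F i = 0"
      unfolding F_def by (cases "j = n") (auto simp: acoef_def rec_a_def)
  qed
  moreover have "moment (F * p k) = 0" if "k \<le> n" for k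
  proof -
    have "moment (F * p k) = moment (pCons 0 (p n * p k)) - (acoef p (Suc n) * moment (p (Suc n) * p k)
       + bcoef w p n * moment (p n * p k) + rec_a n * moment (p (n - 1) * p k))"
      unfolding F_def by (simp only: ring_distribs mult_smult_left mult_pCons_left moment_linear
          smult_0_left add_0)
    then show ?thesis using that
      by (cases n) (auto simp: moment_x_pp moment_pp rec_a_def)
  qed
  ultimately have "F = 0" by (rule eq_0_if_orthogonal)
  then show ?thesis unfolding F_def by simp
qed

lemma sublead_diff: "sublead n - sublead (Suc n) = bcoef w p n"
proof -
  have coeff_recurrence: "coeff (pCons 0 (p n)) n =
      acoef p (Suc n) * coeff (p (Suc n)) n + bcoef w p n * gam p n + rec_a n * coeff (p (n - 1)) n"
    by (subst three_term_recurrence) simp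
  have "sublead n * gam p n = gam p n * (coeff (p (Suc n)) n / gam p (Suc n) + bcoef w p n)"
  proof (cases n)
    case 0
    then show ?thesis using coeff_recurrence by (simp add: rec_a_def acoef_def sublead_def algebra_simps)
  next
    case (Suc j)
    then show ?thesis using coeff_recurrence by (simp add: acoef_def sublead_def field_simps)
  qed
  then show ?thesis by (simp add: sublead_def)
qed

lemma poly_three_term_recurrence:
  "x * poly (p n) x =
    acoef p (Suc n) * poly (p (Suc n)) x + bcoef w p n * poly (p n) x + rec_a n * poly (p (n - 1)) x"
  using arg_cong[OF three_term_recurrence, of "\<lambda>q. poly q x"] by simp

lemma poly_p_Suc_or_p_nonzero: "poly (p m) x \<noteq> 0 \<or> poly (p (Suc m)) x \<noteq> 0"
proof (induction m)
  case 0
  then show ?case by (subst (1) p_0) simp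
next
  case (Suc m)
  show ?case
  proof (rule ccontr)
    assume "\<not> ?case"
    then have "acoef p (Suc m) * poly (p m) x = 0"
      using poly_three_term_recurrence[of x "Suc m"] by (simp add: rec_a_def)
    then show False using Suc.IH \<open>\<not> ?case\<close> acoef_pos[of "Suc m"] by simp
  qed
qed

end

section \<open>The ladder relations for a weight of Pearson type\<close>

lemma det2_eq_0_if_nontrivial_kernel:
  fixes u v r s P Q :: "'a :: idom"
  assumes "u * P + v * Q = 0" "r * P + s * Q = 0" "P \<noteq> 0 \<or> Q \<noteq> 0"
  shows "u * s - v * r = 0"
proof -
  have "(u * s - v * r) * P = s * (u * P + v * Q) - v * (r * P + s * Q)"
    "(u * s - v * r) * Q = u * (r * P + s * Q) - r * (u * P + v * Q)"
    by (simp_all add: algebra_simps)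
  then show ?thesis using assms by auto
qed

text \<open>With \<open>A(x) = x(x - t)\<close> and \<open>B(x) = -\<mu>t + (\<alpha> + \<mu> + t)x - x\<^sup>2\<close>, the hypothesis is the weak
  form of the Pearson equation \<open>(A w)' = B w\<close>: integrating \<open>(A q w)'\<close> over the support gives zero.\<close>

locale pearson_weight = orthonormal_polys w p for w p +
  fixes t \<alpha> \<mu> :: real
  assumes moment_pearson:
    "\<And>q. moment (pderiv ([:0, -t, 1:] * q) + q * [:-\<mu> * t, \<alpha> + \<mu> + t, -1:]) = 0"
begin

definition Dp :: "nat \<Rightarrow> real poly" where
  "Dp m = [:0, -t, 1:] * pderiv (p m)"

lemma moment_A_pderiv:
  "moment ([:0, -t, 1:] * pderiv q) =
    (1 + \<mu>) * t * moment q - (2 + \<alpha> + \<mu> + t) * moment (pCons 0 q) + moment (pCons 0 (pCons 0 q))"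
proof -
  have expand: "pderiv ([:0, -t, 1:] * q) + q * [:-\<mu> * t, \<alpha> + \<mu> + t, -1:] =
     [:0, -t, 1:] * pderiv q + (smult (- (1 + \<mu>) * t) q
       + (smult (2 + \<alpha> + \<mu> + t) (pCons 0 q) - pCons 0 (pCons 0 q)))"
    by (rule poly_eq_poly_eq_iff[THEN iffD1], rule ext)
      (simp add: pderiv_mult pderiv_pCons pderiv_diff pderiv_smult pderiv_add algebra_simps)
  have "0 = moment ([:0, -t, 1:] * pderiv q) + (- (1 + \<mu>) * t * moment q
      + ((2 + \<alpha> + \<mu> + t) * moment (pCons 0 q) - moment (pCons 0 (pCons 0 q))))"
    using moment_pearson[of q] unfolding expand by (simp only: moment_linear)
  then show ?thesis by (simp add: algebra_simps)
qed

lemma moment_Dp_symmetric: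
  "moment (Dp m * p k) + moment (Dp k * p m) =
    (1 + \<mu>) * t * moment (p m * p k) - (2 + \<alpha> + \<mu> + t) * moment (pCons 0 (p m * p k))
    + moment (pCons 0 (pCons 0 (p m * p k)))"
proof -
  have "[:0, -t, 1:] * pderiv (p m * p k) = Dp m * p k + Dp k * p m"
    unfolding Dp_def by (simp add: pderiv_mult algebra_simps)
  then show ?thesis using moment_A_pderiv[of "p m * p k"] by (simp add: moment_add)
qed

lemma coeff_Dp_0 [simp]: "coeff (Dp m) 0 = 0"
  unfolding Dp_def by simp

lemma coeff_Dp_Suc:
  "coeff (Dp m) (Suc i) = real i * coeff (p m) i - t * real (Suc i) * coeff (p m) (Suc i)"
  unfolding Dp_def by (cases i) (simp_all add: coeff_pderiv algebra_simps)

lemma degree_Dp: "degree (Dp m) \<le> Suc m"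
proof (rule degree_le, intro allI impI)
  fix i assume "Suc m < i"
  then show "coeff (Dp m) i = 0" by (cases i) (simp_all add: coeff_Dp_Suc)
qed

lemma coeff_Dp_top: "coeff (Dp m) (Suc m) = real m * gam p m"
  by (simp add: coeff_Dp_Suc)

lemma coeff_Dp_degree: "coeff (Dp m) m = (real m - 1) * sublead m * gam p m - t * real m * gam p m"
  by (cases m) (simp_all add: coeff_Dp_Suc sublead_def)

lemma moment_Dp_p_self: "moment (Dp m * p m) = real m * bcoef w p m - sublead m - t * real m"
proof -
  have "moment (Dp m * p m) = (coeff (Dp m) m - coeff (Dp m) (Suc m) * sublead (Suc m)) / gam p m"
    using moment_mult_p_degree_le_Suc[OF degree_Dp] by (simp add: sublead_def)
  also have "sublead (Suc m) = sublead m - bcoef w p m"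
    using sublead_diff[of m] by simp
  also have "coeff (Dp m) m - coeff (Dp m) (Suc m) * (sublead m - bcoef w p m) =
      gam p m * (real m * bcoef w p m - sublead m - t * real m)"
    by (simp add: coeff_Dp_degree coeff_Dp_top algebra_simps)
  finally show ?thesis by simp
qed

lemma moment_x2_pp_self:
  "moment (pCons 0 (pCons 0 (p m * p m))) = (acoef p (Suc m))\<^sup>2 + (bcoef w p m)\<^sup>2 + (rec_a m)\<^sup>2"
proof -
  have "pCons 0 (pCons 0 (p m * p m)) = pCons 0 (p m) * pCons 0 (p m)" by simp
  also have "\<dots> = (smult (acoef p (Suc m)) (p (Suc m)) + smult (bcoef w p m) (p m) + smult (rec_a m) (p (m - 1)))
      * (smult (acoef p (Suc m)) (p (Suc m)) + smult (bcoef w p m) (p m) + smult (rec_a m) (p (m - 1)))"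
    by (simp only: three_term_recurrence)
  finally show ?thesis
    by (cases m) (simp_all add: ring_distribs moment_linear moment_pp rec_a_def power2_eq_square)
qed

definition kappa :: "nat \<Rightarrow> real" where
  "kappa m = (real m + \<mu> / 2) * t + (rec_a m)\<^sup>2 + sublead m"

definition theta :: "nat \<Rightarrow> real" where
  "theta m = bcoef w p m - 2 * real m - 1 - \<alpha> - \<mu> - t"

theorem kappa_Suc_add: "kappa (Suc m) + kappa m = - theta m * bcoef w p m"
proof -
  have "2 * (real m * bcoef w p m - sublead m - t * real m) = (1 + \<mu>) * t
      - (2 + \<alpha> + \<mu> + t) * bcoef w p m + (acoef p (Suc m))\<^sup>2 + (bcoef w p m)\<^sup>2 + (rec_a m)\<^sup>2"
    using moment_Dp_symmetric[of m m] by (simp add: moment_Dp_p_self moment_pp moment_x_pp moment_x2_pp_self)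
  then show ?thesis using sublead_diff[of m] unfolding kappa_def theta_def
    by (simp add: rec_a_def algebra_simps power2_eq_square)
qed

lemma moment_Dp_p_greater:
  assumes "k < n"
  shows "moment (Dp k * p n) = (if Suc k = n then real k * acoef p n else 0)"
proof -
  have "moment (Dp k * p n) = coeff (Dp k) n / gam p n"
    using degree_Dp[of k] assms by (intro moment_mult_p_degree_le) simp
  moreover have "coeff (Dp k) n = (if Suc k = n then real k * gam p k else 0)"
    using coeff_Dp_top[of k] degree_Dp[of k] assms by (auto simp: coeff_eq_0)
  ultimately show ?thesis using assms by (auto simp: acoef_def)
qed

lemma moment_x2_pp_less:
  assumes "k < n"
  shows "moment (pCons 0 (pCons 0 (p n * p k))) =
    (if Suc k = n then acoef p n * (bcoef w p k + bcoef w p n)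
     else if Suc (Suc k) = n then acoef p n * acoef p (n - 1) else 0)"
proof -
  define r where "r = pCons 0 (pCons 0 (p k))"
  have r: "pCons 0 (pCons 0 (p n * p k)) = r * p n" unfolding r_def by (simp add: mult.commute)
  have degree_r: "degree r = Suc (Suc k)" unfolding r_def by (simp add: degree_pCons_eq_if)
  consider "Suc k = n" | "Suc (Suc k) = n" | "Suc (Suc k) < n" using assms by linarith
  then show ?thesis
  proof cases
    case 1
    then have "moment (r * p n) = (coeff r n - coeff r (Suc n) * sublead (Suc n)) / gam p n"
      using degree_r moment_mult_p_degree_le_Suc[of r n] by (simp add: sublead_def)
    moreover have "coeff r n = sublead k * gam p k" "coeff r (Suc n) = gam p k"
      using 1 unfolding r_def sublead_def by (cases k; auto)+
    moreover have "sublead k - sublead (Suc n) = bcoef w p k + bcoef w p n"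
      using sublead_diff[of k] sublead_diff[of n] 1 by simp
    ultimately show ?thesis using 1 unfolding r by (auto simp: acoef_def field_simps)
  next
    case 2
    then have "moment (r * p n) = coeff r n / gam p n"
      using degree_r by (intro moment_mult_p_degree_le) simp
    then show ?thesis using 2 unfolding r r_def by (auto simp: acoef_def)
  next
    case 3
    then show ?thesis unfolding r using degree_r by (simp add: moment_mult_p_degree_less)
  qed
qed

lemma moment_Dp_p_less:
  assumes "k < n"
  shows "moment (Dp n * p k) =
    (if Suc k = n then acoef p n * (bcoef w p k + bcoef w p n - real k - (2 + \<alpha> + \<mu> + t))
     else if Suc (Suc k) = n then acoef p n * acoef p (n - 1) else 0)"
proof -
  have "moment (Dp n * p k) = - moment (Dp k * p n) + (1 + \<mu>) * t * moment (p n * p k)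
      - (2 + \<alpha> + \<mu> + t) * moment (pCons 0 (p n * p k)) + moment (pCons 0 (pCons 0 (p n * p k)))"
    using moment_Dp_symmetric[of n k] by linarith
  then show ?thesis
    unfolding moment_Dp_p_greater[OF assms] moment_x2_pp_less[OF assms] using assms
    by (auto simp: moment_pp moment_x_pp algebra_simps)
qed

theorem Dp_expansion:
  assumes "n = Suc j"
  shows "Dp n = smult (\<mu> * t / 2 - kappa n) (p n) + smult (real n) (pCons 0 (p n))
    + smult (acoef p n) (smult (theta n) (p j) + pCons 0 (p j))"
proof -
  define F where "F = Dp n - (smult (\<mu> * t / 2 - kappa n) (p n) + smult (real n) (pCons 0 (p n))
    + smult (acoef p n) (smult (theta n) (p j) + pCons 0 (p j)))"
  have "degree F \<le> j"
  proof (rule degree_le, intro allI impI)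
    fix i assume "j < i"
    then consider "i = n" | "i = Suc n" | "Suc n < i" using assms by linarith
    then show "coeff F i = 0"
    proof cases
      case 1
      have "acoef p n * gam p n = gam p j" using assms by (simp add: acoef_def)
      then show ?thesis unfolding F_def 1 using assms
        by (simp add: coeff_Dp_degree kappa_def rec_a_def sublead_def algebra_simps power2_eq_square)
    next
      case 2
      then show ?thesis unfolding F_def using assms by (simp add: coeff_Dp_top)
    next
      case 3
      then have "coeff (Dp n) i = 0" using degree_Dp[of n] by (simp add: coeff_eq_0)
      then show ?thesis unfolding F_def using 3 assms by (cases i) auto
    qed
  qed
  moreover have "moment (F * p k) = 0" if "k \<le> j" for k
  proof -
    have expand: "moment (F * p k) = moment (Dp n * p k) - ((\<mu> * t / 2 - kappa n) * moment (p n * p k)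
       + real n * moment (pCons 0 (p n * p k))
       + acoef p n * (theta n * moment (p j * p k) + moment (pCons 0 (p j * p k))))"
      unfolding F_def
      by (simp only: ring_distribs mult_smult_left mult_pCons_left moment_linear smult_0_left add_0)
    have "k < n" using that assms by simp
    from that consider "k = j" | "Suc k = j" | "Suc k < j" by linarith
    then show ?thesis
      unfolding expand moment_Dp_p_less[OF \<open>k < n\<close>] using assms
      by cases (simp_all add: moment_pp moment_x_pp theta_def algebra_simps)
  qed
  ultimately have "F = 0" by (rule eq_0_if_orthogonal)
  then show ?thesis unfolding F_def by simp
qed

lemma poly_Dp_expansion_at_root:
  assumes "x = 0 \<or> x = t"
  shows "(\<mu> * t / 2 - kappa m + real m * x) * poly (p m) x
    + rec_a m * (theta m + x) * poly (p (m - 1)) x = 0"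
proof (cases m)
  case 0
  then show ?thesis by (simp add: kappa_def rec_a_def sublead_def)
next
  case (Suc j)
  have "poly (Dp m) x = 0" unfolding Dp_def using assms by auto
  then show ?thesis using arg_cong[OF Dp_expansion[OF Suc], of "\<lambda>q. poly q x"] Suc
    by (simp add: rec_a_def algebra_simps)
qed

text \<open>At a zero \<open>x\<close> of \<open>A\<close>, the expansion of \<open>Dp\<close> at degrees \<open>n\<close> and \<open>n - 1\<close>, the latter rewritten
  with the recurrence, is a linear system in \<open>(p\<^sub>n(x), p\<^sub>n\<^sub>-\<^sub>1(x))\<close> with a nonzero solution.\<close>

lemma ladder_determinant_at_root:
  assumes "n = Suc j" and x: "x = 0 \<or> x = t"
  shows "(\<mu> * t / 2 - kappa n + real n * x)
      * (\<mu> * t / 2 - kappa j + real j * x + (theta j + x) * (x - bcoef w p j))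
    + (acoef p n)\<^sup>2 * (theta n + x) * (theta j + x) = 0"
proof -
  define P Q R where "P = poly (p n) x" and "Q = poly (p j) x" and "R = poly (p (j - 1)) x"
  have "(\<mu> * t / 2 - kappa n + real n * x) * P + (acoef p n * (theta n + x)) * Q = 0"
    using poly_Dp_expansion_at_root[OF x, of n] assms unfolding P_def Q_def
    by (simp add: rec_a_def algebra_simps)
  moreover have "(- (acoef p n * (theta j + x))) * P
      + (\<mu> * t / 2 - kappa j + real j * x + (theta j + x) * (x - bcoef w p j)) * Q = 0"
  proof -
    have recurrence: "rec_a j * R = x * Q - acoef p n * P - bcoef w p j * Q"
      using poly_three_term_recurrence[of x j] assms unfolding P_def Q_def R_def by simp
    have "(\<mu> * t / 2 - kappa j + real j * x) * Q + (theta j + x) * (rec_a j * R) = 0"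
      using poly_Dp_expansion_at_root[OF x, of j] unfolding Q_def R_def by (simp add: algebra_simps)
    then show ?thesis unfolding recurrence by (simp add: algebra_simps)
  qed
  moreover have "P \<noteq> 0 \<or> Q \<noteq> 0"
    using poly_p_Suc_or_p_nonzero[of j x] assms unfolding P_def Q_def by auto
  ultimately have "(\<mu> * t / 2 - kappa n + real n * x)
      * (\<mu> * t / 2 - kappa j + real j * x + (theta j + x) * (x - bcoef w p j))
    - (acoef p n * (theta n + x)) * (- (acoef p n * (theta j + x))) = 0"
    by (rule det2_eq_0_if_nontrivial_kernel)
  then show ?thesis by (simp add: algebra_simps power2_eq_square)
qed

theorem kappa_product_at_0:
  assumes "n = Suc j"
  shows "(acoef p n)\<^sup>2 * (theta n * theta j) = (kappa n)\<^sup>2 - \<mu>\<^sup>2 * t\<^sup>2 / 4"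
proof -
  have "kappa j = - theta j * bcoef w p j - kappa n"
    using kappa_Suc_add[of j] assms by simp
  with ladder_determinant_at_root[OF assms, of 0] show ?thesis
    by (simp add: algebra_simps power2_eq_square)
qed

theorem kappa_product_at_t:
  assumes "n = Suc j"
  shows "(acoef p n)\<^sup>2 * ((theta n + t) * (theta j + t)) =
    (kappa n - (real n + \<mu> / 2) * t) * (kappa n - (real n + \<alpha> + \<mu> / 2) * t)"
proof -
  have kappa_j: "kappa j = - theta j * bcoef w p j - kappa n"
    using kappa_Suc_add[of j] assms by simp
  have theta_j: "theta j = bcoef w p j - 2 * real n + 1 - \<alpha> - \<mu> - t"
    using assms unfolding theta_def by simp
  have "(acoef p n)\<^sup>2 * ((theta n + t) * (theta j + t))
      - (kappa n - (real n + \<mu> / 2) * t) * (kappa n - (real n + \<alpha> + \<mu> / 2) * t) =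
    (\<mu> * t / 2 - kappa n + real n * t)
      * (\<mu> * t / 2 - kappa j + real j * t + (theta j + t) * (t - bcoef w p j))
    + (acoef p n)\<^sup>2 * (theta n + t) * (theta j + t)"
    unfolding kappa_j theta_j using assms by (simp add: algebra_simps power2_eq_square)
  then show ?thesis using ladder_determinant_at_root[OF assms, of t] by simp
qed

end

section \<open>The weight satisfies the Pearson equation\<close>

lemma tendsto_poly_powr_exp_at_top:
  "((\<lambda>x::real. poly q x * x powr b * exp (- x)) \<longlongrightarrow> 0) at_top"
proof (induction q arbitrary: b rule: pCons_induct)
  case (pCons a q)
  have "((\<lambda>x::real. a * (x powr b * exp (- x)) + poly q x * x powr (b + 1) * exp (- x))
      \<longlongrightarrow> a * 0 + 0) at_top"
    by (intro tendsto_add tendsto_mult tendsto_const pCons.IH) real_asymp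
  moreover have "eventually (\<lambda>x::real. a * (x powr b * exp (- x)) + poly q x * x powr (b + 1) * exp (- x)
     = poly (pCons a q) x * x powr b * exp (- x)) at_top"
    using eventually_gt_at_top[of 0] by eventually_elim (simp add: powr_add algebra_simps)
  ultimately show ?case by (simp add: tendsto_cong)
qed simp

lemma tendsto_powr_mult_0:
  fixes h g :: "'a \<Rightarrow> real"
  assumes "(h \<longlongrightarrow> 0) F" "eventually (\<lambda>x. 0 \<le> h x) F" "s > 0" "(g \<longlongrightarrow> l) F"
  shows "((\<lambda>x. h x powr s * g x) \<longlongrightarrow> 0) F"
proof -
  have "((\<lambda>x. h x powr s) \<longlongrightarrow> 0) F"
    using assms by (intro tendsto_zero_powrI[of h _ "\<lambda>_. s" s]) auto
  from tendsto_mult[OF this assms(4)] show ?thesis by simp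
qed

lemma antiderivative_diff_le_set_integral:
  fixes f F :: "real \<Rightarrow> real"
  assumes int: "set_integrable lborel {a<..<b} f"
    and nonneg: "\<And>x. a < x \<Longrightarrow> x < b \<Longrightarrow> 0 \<le> f x"
    and deriv: "\<And>x. a < x \<Longrightarrow> x < b \<Longrightarrow> (F has_real_derivative f x) (at x)"
    and cont: "\<And>x. a < x \<Longrightarrow> x < b \<Longrightarrow> isCont f x"
    and cd: "a < c" "c \<le> d" "d < b"
  shows "F d - F c \<le> (LINT x:{a<..<b}|lborel. f x)"
proof -
  have "(LINT x:{c..d}|lborel. f x) = F d - F c"
    unfolding set_lebesgue_integral_def
  proof (rule integral_FTC_atLeastAtMost)
    show "(F has_vector_derivative f x) (at x within {c..d})" if "c \<le> x" "x \<le> d" for x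
      using deriv[of x] that cd
      by (auto simp: has_real_derivative_iff_has_vector_derivative[symmetric]
          intro: has_field_derivative_at_within)
    show "continuous_on {c..d} f"
      using cont cd by (intro continuous_at_imp_continuous_on) auto
  qed (use cd in simp)
  moreover have "(LINT x:{c..d}|lborel. f x) \<le> (LINT x:{a<..<b}|lborel. f x)"
    unfolding set_lebesgue_integral_def
  proof (rule integral_mono)
    have "set_integrable lborel {c..d} f"
      by (rule set_integrable_subset[OF int]) (use cd in auto)
    then show "integrable lborel (\<lambda>x. indicator {c..d} x *\<^sub>R f x)"
      by (simp add: set_integrable_def)
    show "integrable lborel (\<lambda>x. indicator {a<..<b} x *\<^sub>R f x)"
      using int by (simp add: set_integrable_def)
    show "indicator {c..d} x *\<^sub>R f x \<le> indicator {a<..<b} x *\<^sub>R f x" for x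
      using cd nonneg[of x] by (auto split: split_indicator)
  qed
  ultimately show ?thesis by simp
qed

lemma not_set_integrable_inverse_diff:
  assumes "a < b"
  shows "\<not> set_integrable lborel {a<..<b} (\<lambda>x::real. 1 / (x - a))"
proof
  assume int: "set_integrable lborel {a<..<b} (\<lambda>x::real. 1 / (x - a))"
  define I where "I = (LINT x:{a<..<b}|lborel. 1 / (x - a))"
  define d where "d = (a + b) / 2"
  have d: "a < d" "d < b" using assms unfolding d_def by simp_all
  have "filterlim (\<lambda>x. ln (x - a)) at_bot (at_right a)"
    by (metis diff_self filterlim_filtermap filtermap_at_right_shift ln_at_0)
  then have "eventually (\<lambda>c. ln (c - a) \<le> ln (d - a) - I - 1) (at_right a)"
    by (simp add: filterlim_at_bot)
  moreover have "eventually (\<lambda>c. a < c \<and> c < d) (at_right a)"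
    using d(1) by (simp add: eventually_at_right_field) (meson eventually_at_right_less)
  ultimately have "eventually (\<lambda>c. ln (c - a) \<le> ln (d - a) - I - 1 \<and> a < c \<and> c < d) (at_right a)"
    by eventually_elim auto
  then obtain c where c: "ln (c - a) \<le> ln (d - a) - I - 1" "a < c" "c < d"
    using eventually_happens'[OF trivial_limit_at_right_real] by blast
  have "ln (d - a) - ln (c - a) \<le> I" unfolding I_def
  proof (rule antiderivative_diff_le_set_integral[OF int, where F = "\<lambda>x. ln (x - a)"])
    show "((\<lambda>x. ln (x - a)) has_real_derivative 1 / (x - a)) (at x)" if "a < x" "x < b" for x
      using that by (auto intro!: derivative_eq_intros)
    show "isCont (\<lambda>x. 1 / (x - a)) x" if "a < x" "x < b" for x
      using that by (auto intro!: continuous_intros)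
    show "0 \<le> 1 / (x - a)" if "a < x" "x < b" for x
      using that by simp
  qed (use c d in simp_all)
  with c show False by linarith
qed

lemma exponent_gt_minus_one_if_set_integrable:
  fixes f :: "real \<Rightarrow> real"
  assumes "a < b" "c > 0"
    and bound: "\<And>x. a < x \<Longrightarrow> x < b \<Longrightarrow> c * (x - a) powr r \<le> f x"
    and int: "set_integrable lborel {a<..<b} f"
  shows "r > -1"
proof (rule ccontr)
  assume "\<not> r > -1"
  define b' where "b' = min b (a + 1)"
  have "a < b'" using assms unfolding b'_def by simp
  have "set_integrable lborel {a<..<b'} (\<lambda>x. f x / c)"
    by (rule set_integrable_divide, rule set_integrable_subset[OF int]) (auto simp: b'_def)
  then have "set_integrable lborel {a<..<b'} (\<lambda>x. 1 / (x - a))"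
  proof (rule set_integrable_bound)
    show "set_borel_measurable lborel {a<..<b'} (\<lambda>x. 1 / (x - a))"
      unfolding set_borel_measurable_def by measurable
    show "AE x in lborel. x \<in> {a<..<b'} \<longrightarrow> norm (1 / (x - a)) \<le> norm (f x / c)"
    proof (intro AE_I2 impI)
      fix x assume x: "x \<in> {a<..<b'}"
      then have "1 / (x - a) \<le> (x - a) powr r"
        using powr_mono'[of r "-1" "x - a"] \<open>\<not> r > -1\<close> by (simp add: b'_def powr_neg_one)
      also have "\<dots> \<le> f x / c"
        using bound[of x] x \<open>c > 0\<close> by (simp add: b'_def field_simps)
      finally show "norm (1 / (x - a)) \<le> norm (f x / c)"
        using x abs_ge_self[of "f x / c"] by simp
    qed
  qed
  then show False using not_set_integrable_inverse_diff[OF \<open>a < b'\<close>] by simp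
qed

lemma min_powr_le_powr:
  "0 < a \<Longrightarrow> a \<le> y \<Longrightarrow> y \<le> b \<Longrightarrow> min (a powr r) (b powr r) \<le> y powr (r :: real)"
proof (cases "r \<ge> 0")
  case True
  assume "0 < a" "a \<le> y" "y \<le> b"
  then have "a powr r \<le> y powr r" using True by (intro powr_mono2) auto
  then show ?thesis by simp
next
  case False
  assume "0 < a" "a \<le> y" "y \<le> b"
  then have "b powr r \<le> y powr r" using False by (intro powr_mono2') auto
  then show ?thesis by simp
qed

locale laguerre_jump_system = orthonormal_polys "wgt \<zeta> t \<alpha> \<mu>" p for \<zeta> t \<alpha> \<mu> :: real and p +
  assumes zeta_less_1: "\<zeta> < 1" and t_pos: "t > 0"
begin

abbreviation \<omega> :: "real \<Rightarrow> real" where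
  "\<omega> \<equiv> wgt \<zeta> t \<alpha> \<mu>"

lemma wgt_below: "0 < x \<Longrightarrow> x < t \<Longrightarrow> \<omega> x = (t - x) powr \<alpha> * x powr \<mu> * exp (- x)"
  by (simp add: wgt_def heaviside_def abs_if)

lemma wgt_above: "t < x \<Longrightarrow> \<omega> x = (1 - \<zeta>) * ((x - t) powr \<alpha> * x powr \<mu> * exp (- x))"
  by (simp add: wgt_def heaviside_def abs_if)

lemma set_integrable_wgt: "set_integrable lborel {0<..} \<omega>"
  using set_integrable_poly[of 1] by simp

text \<open>The exponents are arbitrary reals, but integrability of \<open>\<omega>\<close> (part of orthonormality) forces
  \<open>\<alpha>, \<mu> > -1\<close>.\<close>

lemma mu_gt_minus_one: "\<mu> > -1"
proof (rule exponent_gt_minus_one_if_set_integrable)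
  define c where "c = min ((t / 2) powr \<alpha>) (t powr \<alpha>) * exp (- t)"
  show "0 < t / 2" "c > 0" using t_pos unfolding c_def by simp_all
  show "set_integrable lborel {0<..<t / 2} \<omega>"
    by (rule set_integrable_subset[OF set_integrable_wgt]) auto
  show "c * (x - 0) powr \<mu> \<le> \<omega> x" if "0 < x" "x < t / 2" for x
  proof -
    have "min ((t / 2) powr \<alpha>) (t powr \<alpha>) \<le> (t - x) powr \<alpha>"
      using that by (intro min_powr_le_powr) auto
    moreover have "exp (- t) \<le> exp (- x)" using that by simp
    ultimately have "c \<le> (t - x) powr \<alpha> * exp (- x)"
      unfolding c_def by (intro mult_mono) auto
    then show ?thesis
      using that wgt_below[of x] by (simp add: mult_right_mono algebra_simps)
  qed
qed

lemma alpha_gt_minus_one: "\<alpha> > -1"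
proof (rule exponent_gt_minus_one_if_set_integrable)
  define c where "c = (1 - \<zeta>) * (min (t powr \<mu>) ((t + 1) powr \<mu>) * exp (- (t + 1)))"
  show "t < t + 1" "c > 0" using t_pos zeta_less_1 unfolding c_def by simp_all
  show "set_integrable lborel {t<..<t + 1} \<omega>"
    by (rule set_integrable_subset[OF set_integrable_wgt]) (use t_pos in auto)
  show "c * (x - t) powr \<alpha> \<le> \<omega> x" if "t < x" "x < t + 1" for x
  proof -
    have "min (t powr \<mu>) ((t + 1) powr \<mu>) \<le> x powr \<mu>"
      using that t_pos by (intro min_powr_le_powr) auto
    moreover have "exp (- (t + 1)) \<le> exp (- x)" using that by simp
    ultimately have "c \<le> (1 - \<zeta>) * (x powr \<mu> * exp (- x))"
      unfolding c_def using zeta_less_1 by (intro mult_left_mono mult_mono) auto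
    then have "c * (x - t) powr \<alpha> \<le> (1 - \<zeta>) * (x powr \<mu> * exp (- x)) * (x - t) powr \<alpha>"
      by (rule mult_right_mono) simp
    also have "\<dots> = \<omega> x"
      using that wgt_above[of x] by (simp add: algebra_simps)
    finally show ?thesis .
  qed
qed

lemma has_real_derivative_wgt:
  assumes "0 < x" "x \<noteq> t"
  shows "(\<omega> has_real_derivative \<omega> x * (\<alpha> / (x - t) + \<mu> / x - 1)) (at x)"
proof (cases "x < t")
  case True
  have "((\<lambda>y. (t - y) powr \<alpha> * y powr \<mu> * exp (- y)) has_real_derivative
      (t - x) powr \<alpha> * x powr \<mu> * exp (- x) * (\<alpha> / (x - t) + \<mu> / x - 1)) (at x)"
    using assms True by (auto intro!: derivative_eq_intros simp: powr_diff field_simps)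
  moreover have "eventually (\<lambda>y. \<omega> y = (t - y) powr \<alpha> * y powr \<mu> * exp (- y)) (nhds x)"
    using eventually_nhds_in_open[of "{0<..<t}" x] assms True
    by (auto elim!: eventually_mono simp: wgt_below)
  ultimately show ?thesis
    using wgt_below[OF assms(1) True] by (subst DERIV_cong_ev[OF refl _ refl]) auto
next
  case False
  then have "t < x" using assms by simp
  have "((\<lambda>y. (y - t) powr \<alpha> * y powr \<mu> * exp (- y)) has_real_derivative
      (x - t) powr \<alpha> * x powr \<mu> * exp (- x) * (\<alpha> / (x - t) + \<mu> / x - 1)) (at x)"
    using \<open>t < x\<close> t_pos by (auto intro!: derivative_eq_intros simp: powr_diff field_simps)
  from DERIV_cmult[OF this, of "1 - \<zeta>"]
  have "((\<lambda>y. (1 - \<zeta>) * ((y - t) powr \<alpha> * y powr \<mu> * exp (- y))) has_real_derivative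
      (1 - \<zeta>) * ((x - t) powr \<alpha> * x powr \<mu> * exp (- x)) * (\<alpha> / (x - t) + \<mu> / x - 1)) (at x)"
    by (simp add: mult.assoc)
  moreover have "eventually (\<lambda>y. \<omega> y = (1 - \<zeta>) * ((y - t) powr \<alpha> * y powr \<mu> * exp (- y))) (nhds x)"
    using eventually_nhds_in_open[of "{t<..}" x] \<open>t < x\<close>
    by (auto elim!: eventually_mono simp: wgt_above)
  ultimately show ?thesis
    using wgt_above[OF \<open>t < x\<close>] by (subst DERIV_cong_ev[OF refl _ refl]) auto
qed

lemma isCont_poly_wgt: "0 < x \<Longrightarrow> x \<noteq> t \<Longrightarrow> isCont (\<lambda>y. poly r y * \<omega> y) x"
  using has_real_derivative_wgt DERIV_isCont by (intro continuous_intros) blast+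

lemma has_real_derivative_boundary_term:
  assumes "0 < x" "x \<noteq> t"
  shows "((\<lambda>y. poly ([:0, -t, 1:] * q) y * \<omega> y) has_real_derivative
    poly (pderiv ([:0, -t, 1:] * q) + q * [:-\<mu> * t, \<alpha> + \<mu> + t, -1:]) x * \<omega> x) (at x)"
proof -
  have "poly ([:0, -t, 1:] * q) x * (\<omega> x * (\<alpha> / (x - t) + \<mu> / x - 1))
     = poly (q * [:-\<mu> * t, \<alpha> + \<mu> + t, -1:]) x * \<omega> x"
    using assms by (simp add: field_simps)
  then show ?thesis
    by (intro DERIV_mult'[OF poly_DERIV has_real_derivative_wgt[OF assms], THEN DERIV_cong])
      (simp add: algebra_simps)
qed

lemma tendsto_boundary_term_at_right_0:
  "((\<lambda>y. poly ([:0, -t, 1:] * q) y * \<omega> y) \<longlongrightarrow> 0) (at_right 0)"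
proof (rule Lim_transform_eventually)
  show "((\<lambda>y. y powr (1 + \<mu>) * (poly ([:-t, 1:] * q) y * (t - y) powr \<alpha> * exp (- y))) \<longlongrightarrow> 0)
      (at_right 0)"
  proof (rule tendsto_powr_mult_0)
    show "((\<lambda>y. poly ([:-t, 1:] * q) y * (t - y) powr \<alpha> * exp (- y)) \<longlongrightarrow>
        poly ([:-t, 1:] * q) 0 * (t - 0) powr \<alpha> * exp (- 0)) (at_right 0)"
      using t_pos by (intro tendsto_intros) auto
  qed (use mu_gt_minus_one eventually_at_right_less[of 0] in \<open>auto elim: eventually_mono\<close>)
  show "eventually (\<lambda>y. y powr (1 + \<mu>) * (poly ([:-t, 1:] * q) y * (t - y) powr \<alpha> * exp (- y))
      = poly ([:0, -t, 1:] * q) y * \<omega> y) (at_right 0)"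
    using eventually_at_right_real[OF t_pos] by eventually_elim (simp add: wgt_below powr_add)
qed

lemma tendsto_boundary_term_at_left_t:
  "((\<lambda>y. poly ([:0, -t, 1:] * q) y * \<omega> y) \<longlongrightarrow> 0) (at_left t)"
proof (rule Lim_transform_eventually)
  show "((\<lambda>y. (t - y) powr (1 + \<alpha>) * (- (poly (pCons 0 q) y * y powr \<mu> * exp (- y)))) \<longlongrightarrow> 0)
      (at_left t)"
  proof (rule tendsto_powr_mult_0)
    show "((\<lambda>y. - (poly (pCons 0 q) y * y powr \<mu> * exp (- y))) \<longlongrightarrow>
        - (poly (pCons 0 q) t * t powr \<mu> * exp (- t))) (at_left t)"
      using t_pos by (intro tendsto_intros) auto
    have "((\<lambda>y. t - y) \<longlongrightarrow> t - t) (at_left t)" by (intro tendsto_intros)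
    then show "((\<lambda>y. t - y) \<longlongrightarrow> 0) (at_left t)" by simp
  qed (use alpha_gt_minus_one eventually_at_left_real[OF t_pos] in \<open>auto elim: eventually_mono\<close>)
  show "eventually (\<lambda>y. (t - y) powr (1 + \<alpha>) * (- (poly (pCons 0 q) y * y powr \<mu> * exp (- y)))
      = poly ([:0, -t, 1:] * q) y * \<omega> y) (at_left t)"
    using eventually_at_left_real[OF t_pos]
    by eventually_elim (simp add: wgt_below powr_add algebra_simps)
qed

lemma tendsto_boundary_term_at_right_t:
  "((\<lambda>y. poly ([:0, -t, 1:] * q) y * \<omega> y) \<longlongrightarrow> 0) (at_right t)"
proof (rule Lim_transform_eventually)
  show "((\<lambda>y. (y - t) powr (1 + \<alpha>) * ((1 - \<zeta>) * (poly (pCons 0 q) y * y powr \<mu> * exp (- y))))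
      \<longlongrightarrow> 0) (at_right t)"
  proof (rule tendsto_powr_mult_0)
    show "((\<lambda>y. (1 - \<zeta>) * (poly (pCons 0 q) y * y powr \<mu> * exp (- y))) \<longlongrightarrow>
        (1 - \<zeta>) * (poly (pCons 0 q) t * t powr \<mu> * exp (- t))) (at_right t)"
      using t_pos by (intro tendsto_intros) auto
    have "((\<lambda>y. y - t) \<longlongrightarrow> t - t) (at_right t)" by (intro tendsto_intros)
    then show "((\<lambda>y. y - t) \<longlongrightarrow> 0) (at_right t)" by simp
  qed (use alpha_gt_minus_one eventually_at_right_less[of t] in \<open>auto elim: eventually_mono\<close>)
  show "eventually (\<lambda>y. (y - t) powr (1 + \<alpha>) * ((1 - \<zeta>) * (poly (pCons 0 q) y * y powr \<mu> * exp (- y)))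
      = poly ([:0, -t, 1:] * q) y * \<omega> y) (at_right t)"
    using eventually_at_right_less[of t]
    by eventually_elim (simp add: wgt_above powr_add algebra_simps)
qed

lemma tendsto_boundary_term_at_top:
  "((\<lambda>y. poly ([:0, -t, 1:] * q) y * \<omega> y) \<longlongrightarrow> 0) at_top"
proof (rule Lim_transform_eventually)
  have ratio: "((\<lambda>y::real. ((y - t) / y) powr \<alpha>) \<longlongrightarrow> 1) at_top"
    by real_asymp
  have "((\<lambda>y. (1 - \<zeta>) * (poly ([:0, -t, 1:] * q) y * y powr (\<alpha> + \<mu>) * exp (- y))
      * ((y - t) / y) powr \<alpha>) \<longlongrightarrow> (1 - \<zeta>) * 0 * 1) at_top"
    by (intro tendsto_mult tendsto_const tendsto_poly_powr_exp_at_top ratio)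
  then show "((\<lambda>y. (1 - \<zeta>) * (poly ([:0, -t, 1:] * q) y * y powr (\<alpha> + \<mu>) * exp (- y))
      * ((y - t) / y) powr \<alpha>) \<longlongrightarrow> 0) at_top"
    by simp
  show "eventually (\<lambda>y. (1 - \<zeta>) * (poly ([:0, -t, 1:] * q) y * y powr (\<alpha> + \<mu>) * exp (- y))
      * ((y - t) / y) powr \<alpha> = poly ([:0, -t, 1:] * q) y * \<omega> y) at_top"
    using eventually_gt_at_top[of t]
  proof eventually_elim
    case (elim y)
    then have "(y - t) powr \<alpha> = ((y - t) / y) powr \<alpha> * y powr \<alpha>"
      using t_pos by (subst powr_mult[symmetric]) auto
    then show ?case using elim by (simp add: wgt_above powr_add algebra_simps)
  qed
qed

lemma moment_pearson_wgt:
  "moment (pderiv ([:0, -t, 1:] * q) + q * [:-\<mu> * t, \<alpha> + \<mu> + t, -1:]) = 0"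
proof -
  define f where "f y = poly (pderiv ([:0, -t, 1:] * q) + q * [:-\<mu> * t, \<alpha> + \<mu> + t, -1:]) y * \<omega> y" for y
  define F where "F y = poly ([:0, -t, 1:] * q) y * \<omega> y" for y
  have int: "set_integrable lborel {0<..} f" unfolding f_def by (rule set_integrable_poly)
  have deriv: "(F has_vector_derivative f x) (at x)" if "0 < x" "x \<noteq> t" for x
    using has_real_derivative_boundary_term[OF that]
    unfolding F_def f_def by (simp add: has_real_derivative_iff_has_vector_derivative)
  have cont: "isCont f x" if "0 < x" "x \<noteq> t" for x
    unfolding f_def using isCont_poly_wgt[OF that] .
  have boundary: "(F \<longlongrightarrow> 0) (at_right 0)" "(F \<longlongrightarrow> 0) (at_left t)"
      "(F \<longlongrightarrow> 0) (at_right t)" "(F \<longlongrightarrow> 0) at_top"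
    unfolding F_def by (rule tendsto_boundary_term_at_right_0 tendsto_boundary_term_at_left_t
        tendsto_boundary_term_at_right_t tendsto_boundary_term_at_top)+
  have int_below: "set_integrable lborel {0<..<t} f"
    by (rule set_integrable_subset[OF int]) auto
  have int_above: "set_integrable lborel {t<..} f"
    by (rule set_integrable_subset[OF int]) (use t_pos in auto)
  have "(LBINT x=ereal 0..ereal t. f x) = 0 - 0"
    by (rule interval_integral_FTC_integrable[where F = F])
      (use t_pos deriv cont int_below boundary in \<open>auto simp: ereal_tendsto_simps1\<close>)
  then have below: "(LINT x:{0<..<t}|lborel. f x) = 0"
    using t_pos by (simp add: interval_lebesgue_integral_def)
  have "(LBINT x=ereal t..\<infinity>. f x) = 0 - 0"
    by (rule interval_integral_FTC_integrable[where F = F])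
      (use t_pos deriv cont int_above boundary in \<open>auto simp: ereal_tendsto_simps1\<close>)
  then have above: "(LINT x:{t<..}|lborel. f x) = 0"
    by (simp add: interval_lebesgue_integral_def)
  have "(LINT x:{0<..}|lborel. f x) = (LINT x:{0<..<t} \<union> {t<..}|lborel. f x)"
  proof (rule set_integral_cong_set)
    show "AE x in lborel. (x \<in> {0<..<t} \<union> {t<..}) = (x \<in> {0<..})"
      using AE_lborel_singleton[of t] by eventually_elim (use t_pos in auto)
    have "set_integrable lborel ({0<..<t} \<union> {t<..}) f"
      by (rule set_integrable_subset[OF int]) (use t_pos in auto)
    then show "set_borel_measurable lborel ({0<..<t} \<union> {t<..}) f"
      unfolding set_integrable_def set_borel_measurable_def by (rule borel_measurable_integrable)
    show "set_borel_measurable lborel {0<..} f"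
      using int unfolding set_integrable_def set_borel_measurable_def by (rule borel_measurable_integrable)
  qed
  also have "\<dots> = 0"
    using set_integral_Un[OF _ int_below int_above] below above by (simp add: Int_def)
  finally show ?thesis unfolding moment_def f_def .
qed

end

sublocale laguerre_jump_system \<subseteq> pearson_weight "wgt \<zeta> t \<alpha> \<mu>" p t \<alpha> \<mu>
  by unfold_locales (rule moment_pearson_wgt)

theorem corollary3p2:
  fixes \<zeta> t \<alpha> \<mu> :: real and p :: "nat \<Rightarrow> real poly" and n :: nat
  assumes "\<zeta> < 1" and "t > 0"
    and "orthonormal_system (wgt \<zeta> t \<alpha> \<mu>) p"
    and "n \<ge> 1"
  defines "\<theta>m \<equiv> \<lambda>m::nat. bcoef (wgt \<zeta> t \<alpha> \<mu>) p m - 2 * real m - 1 - \<alpha> - \<mu> - t"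
    and "\<kappa> \<equiv> \<lambda>m::nat. (real m + \<mu> / 2) * t + (acoef p m)^2 + gam1 p m / gam p m"
  shows "\<kappa> (n + 1) + \<kappa> n = - \<theta>m n * (\<theta>m n + t + 2 * real n + \<alpha> + 1 + \<mu>) \<and>
         (\<theta>m n / (\<theta>m n + t)) * (\<theta>m (n - 1) / (\<theta>m (n - 1) + t)) =
         ((\<kappa> n)^2 - \<mu>^2 * t^2 / 4) /
         ((\<kappa> n - (real n + \<alpha> + \<mu> / 2) * t) * (\<kappa> n - (real n + \<mu> / 2) * t))"
proof -
  interpret laguerre_jump_system \<zeta> t \<alpha> \<mu> p
    using assms(1-3) by unfold_locales auto
  obtain j where n: "n = Suc j" using \<open>n \<ge> 1\<close> by (cases n) auto
  have \<theta>m: "\<theta>m = theta" unfolding \<theta>m_def theta_def by simp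
  have \<kappa>: "\<kappa> (Suc m) = kappa (Suc m)" for m
    unfolding \<kappa>_def kappa_def rec_a_def sublead_def gam1_def by simp
  have "\<kappa> (n + 1) + \<kappa> n = - \<theta>m n * (\<theta>m n + t + 2 * real n + \<alpha> + 1 + \<mu>)"
    using kappa_Suc_add[of n] \<kappa>[of n] \<kappa>[of j] unfolding n \<theta>m by (simp add: theta_def algebra_simps)
  moreover have "(\<theta>m n / (\<theta>m n + t)) * (\<theta>m j / (\<theta>m j + t)) =
      ((acoef p n)\<^sup>2 * (theta n * theta j)) / ((acoef p n)\<^sup>2 * ((theta n + t) * (theta j + t)))"
    using acoef_pos[of n] unfolding \<theta>m by simp
  ultimately show ?thesis
    unfolding kappa_product_at_0[OF n] kappa_product_at_t[OF n] using n \<kappa>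
    by (simp add: mult.commute)
qed

end
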